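(* The typical subranks of real $4\times4\times4$ tensors are exactly $2$ and $3$.
   Context: For $r \geq 0$ let $I_r := \sum_{j=1}^r e_j \otimes e_j \otimes e_j$. The subrank of $T \in \mathbb{R}^{n_1} \otimes \mathbb{R}^{n_2} \otimes \mathbb{R}^{n_3}$ is $Q(T) := \max\{ r \mid \exists\ \mathbb{R}\text{-linear } \varphi_i : \mathbb{R}^{n_i} \to \mathbb{R}^r,\ (\varphi_1 \otimes \varphi_2 \otimes \varphi_3) T = I_r\}$. An integer $r$ is a typical subrank of the format $n_1\times n_2\times n_3$ if $\{T \mid Q(T) = r\}$ contains a nonempty Euclidean-open subset of $\mathbb{R}^{n_1} \otimes \mathbb{R}^{n_2} \otimes \mathbb{R}^{n_3}$. *)

theory Defs
  imports "HOL-Analysis.Analysis"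
begin

text \<open>A tensor in R^n1 (x) R^n2 (x) R^n3 is an element T of real^'k^'j^'i with
  coordinates T $ i $ j $ k, where the finite index types 'i, 'j, 'k have
  n1, n2, n3 elements.  An R-linear map R^{n1} -> R^r is given by its r x n1 matrix
  A, stored as a function A :: nat => 'i => real (rows indexed by a < r).\<close>

definition tensor_apply ::
  "(nat \<Rightarrow> 'i::finite \<Rightarrow> real) \<Rightarrow> (nat \<Rightarrow> 'j::finite \<Rightarrow> real) \<Rightarrow> (nat \<Rightarrow> 'k::finite \<Rightarrow> real)
     \<Rightarrow> real^'k^'j^'i \<Rightarrow> nat \<Rightarrow> nat \<Rightarrow> nat \<Rightarrow> real" where
  "tensor_apply A B C T a b c =
     (\<Sum>i\<in>UNIV. \<Sum>j\<in>UNIV. \<Sum>k\<in>UNIV. A a i * B b j * C c k * T $ i $ j $ k)"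

definition unit_tensor :: "nat \<Rightarrow> nat \<Rightarrow> nat \<Rightarrow> real" where
  "unit_tensor a b c = (if a = b \<and> b = c then 1 else 0)"

definition restricts_to_unit :: "real^'k::finite^'j::finite^'i::finite \<Rightarrow> nat \<Rightarrow> bool" where
  "restricts_to_unit T r \<longleftrightarrow>
     (\<exists>A B C. \<forall>a<r. \<forall>b<r. \<forall>c<r. tensor_apply A B C T a b c = unit_tensor a b c)"

definition subrank :: "real^'k::finite^'j::finite^'i::finite \<Rightarrow> nat" where
  "subrank T = Max {r. restricts_to_unit T r}"

definition typical_subrank :: "(real^'k::finite^'j::finite^'i::finite) itself \<Rightarrow> nat \<Rightarrow> bool" where
  "typical_subrank _ r \<longleftrightarrow>
     (\<exists>U :: (real^'k^'j^'i) set. open U \<and> U \<noteq> {} \<and> (\<forall>T\<in>U. subrank T = r))"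

end

theory Submission
  imports Defs "HOL-Computational_Algebra.Polynomial"
begin

text \<open>The subrank of a \<open>4 \<times> 4 \<times> 4\<close> tensor is at most 4, because the vectors \<open>T(x\<^sub>c, y\<^sub>c)\<close> are dual
  to the \<open>z\<^sub>c\<close>. Subrank 4 forces tensor rank at most 4, and those tensors form the image of a smooth map
  \<open>\<real>\<^sup>4\<^sup>8 \<rightarrow> \<real>\<^sup>6\<^sup>4\<close>, a null set. Subrank at least 2 is dense: a small perturbation makes the
  \<open>4 \<times> 4\<close> matrix of \<open>y \<mapsto> (T(x\<^sub>a, y, z\<^sub>c))\<^sub>a\<^sub>,\<^sub>c\<close> invertible. So only 2 and 3 can be typical.

  Near the quaternion multiplication tensor \<open>T(x, y) \<noteq> 0\<close> for all nonzero \<open>x, y\<close>, which rules out a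
  unit restriction of size 3, while the slice matrix stays invertible. Near a tensor that is nonsingular
  on a plane of first arguments there is no unit restriction of size 4; the tensor chosen here restricts
  to \<open>I\<^sub>3\<close> at a point where \<open>(A, B, C) \<mapsto> (A \<otimes> B \<otimes> C) T\<close> is a submersion, so by the open mapping
  theorem all nearby tensors restrict to \<open>I\<^sub>3\<close> as well.\<close>

definition row_vec :: "(nat \<Rightarrow> 'i::finite \<Rightarrow> real) \<Rightarrow> nat \<Rightarrow> real^'i" where
  "row_vec A a = (\<chi> i. A a i)"

definition contract12 :: "real^'k::finite^'j::finite^'i::finite \<Rightarrow> real^'i \<Rightarrow> real^'j \<Rightarrow> real^'k" where
  "contract12 T x y = (\<chi> k. \<Sum>i\<in>UNIV. \<Sum>j\<in>UNIV. x$i * y$j * T$i$j$k)"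

definition contract13 :: "real^'k::finite^'j::finite^'i::finite \<Rightarrow> real^'i \<Rightarrow> real^'k \<Rightarrow> real^'j" where
  "contract13 T x z = (\<chi> j. \<Sum>i\<in>UNIV. \<Sum>k\<in>UNIV. x$i * z$k * T$i$j$k)"

lemma contract12_inner:
  "contract12 T x y \<bullet> z = (\<Sum>i\<in>UNIV. \<Sum>j\<in>UNIV. \<Sum>k\<in>UNIV. x$i * y$j * z$k * T$i$j$k)"
proof -
  have "contract12 T x y \<bullet> z = (\<Sum>k\<in>UNIV. \<Sum>i\<in>UNIV. \<Sum>j\<in>UNIV. x$i * y$j * z$k * T$i$j$k)"
    unfolding contract12_def inner_vec_def
    by (simp add: sum_distrib_left mult.commute mult.left_commute)
  also have "\<dots> = (\<Sum>i\<in>UNIV. \<Sum>k\<in>UNIV. \<Sum>j\<in>UNIV. x$i * y$j * z$k * T$i$j$k)"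
    by (rule sum.swap)
  also have "\<dots> = (\<Sum>i\<in>UNIV. \<Sum>j\<in>UNIV. \<Sum>k\<in>UNIV. x$i * y$j * z$k * T$i$j$k)"
    by (intro sum.cong refl sum.swap)
  finally show ?thesis .
qed

lemma contract13_inner:
  "contract13 T x z \<bullet> y = (\<Sum>i\<in>UNIV. \<Sum>j\<in>UNIV. \<Sum>k\<in>UNIV. x$i * y$j * z$k * T$i$j$k)"
proof -
  have "contract13 T x z \<bullet> y = (\<Sum>j\<in>UNIV. \<Sum>i\<in>UNIV. \<Sum>k\<in>UNIV. x$i * y$j * z$k * T$i$j$k)"
    unfolding contract13_def inner_vec_def
    by (simp add: sum_distrib_left mult.commute mult.left_commute)
  also have "\<dots> = (\<Sum>i\<in>UNIV. \<Sum>j\<in>UNIV. \<Sum>k\<in>UNIV. x$i * y$j * z$k * T$i$j$k)"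
    by (rule sum.swap)
  finally show ?thesis .
qed

lemma contract12_inner_eq_contract13_inner: "contract12 T x y \<bullet> z = contract13 T x z \<bullet> y"
  by (simp only: contract12_inner contract13_inner)

lemma tensor_apply_eq_contract12:
  "tensor_apply A B C T a b c = contract12 T (row_vec A a) (row_vec B b) \<bullet> row_vec C c"
  unfolding contract12_inner tensor_apply_def row_vec_def by simp

lemma contract12_add_left: "contract12 T (x + x') y = contract12 T x y + contract12 T x' y"
  and contract12_add_right: "contract12 T x (y + y') = contract12 T x y + contract12 T x y'"
  and contract12_scaleR_left: "contract12 T (c *\<^sub>R x) y = c *\<^sub>R contract12 T x y"
  and contract12_scaleR_right: "contract12 T x (c *\<^sub>R y) = c *\<^sub>R contract12 T x y"
  by (simp_all add: contract12_def vec_eq_iff sum.distrib sum_distrib_left algebra_simps)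

lemma contract12_zero_left [simp]: "contract12 T 0 y = 0"
  and contract12_zero_right [simp]: "contract12 T x 0 = 0"
  by (simp_all add: contract12_def vec_eq_iff)

lemma contract12_sum_left: "contract12 T (\<Sum>l\<in>S. f l) y = (\<Sum>l\<in>S. contract12 T (f l) y)"
  by (induction S rule: infinite_finite_induct) (auto simp: contract12_add_left)

lemma contract12_sum_right: "contract12 T x (\<Sum>l\<in>S. f l) = (\<Sum>l\<in>S. contract12 T x (f l))"
  by (induction S rule: infinite_finite_induct) (auto simp: contract12_add_right)

lemma linear_contract12_left_inner: "linear (\<lambda>u. contract12 T u y \<bullet> z)"
  by (rule linearI) (simp_all add: contract12_add_left contract12_scaleR_left inner_add_left)

lemma linear_contract12_right_inner: "linear (\<lambda>v. contract12 T x v \<bullet> z)"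
  by (rule linearI) (simp_all add: contract12_add_right contract12_scaleR_right inner_add_left)

lemma sum_axis_mult: "(\<Sum>i\<in>UNIV. axis a (1::real) $ i * f i) = f a"
  by (simp add: axis_def if_distrib[of "\<lambda>x. x * _"] cong: if_cong)

lemma tensor_entry_eq_contract12: "T$i$j$k = contract12 T (axis i 1) (axis j 1) \<bullet> axis k 1"
  unfolding contract12_def by (simp add: inner_axis mult.assoc sum_distrib_left[symmetric] sum_axis_mult)

definition unit_restriction ::
  "real^'k::finite^'j::finite^'i::finite \<Rightarrow> nat \<Rightarrow> (nat \<Rightarrow> real^'i) \<Rightarrow> (nat \<Rightarrow> real^'j) \<Rightarrow> (nat \<Rightarrow> real^'k) \<Rightarrow> bool" where
  "unit_restriction T r x y z \<longleftrightarrow>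
     (\<forall>a<r. \<forall>b<r. \<forall>c<r. contract12 T (x a) (y b) \<bullet> z c = (if a = b \<and> b = c then 1 else 0))"

lemma restricts_to_unit_iff: "restricts_to_unit T r \<longleftrightarrow> (\<exists>x y z. unit_restriction T r x y z)"
proof
  assume "restricts_to_unit T r"
  then obtain A B C where "\<forall>a<r. \<forall>b<r. \<forall>c<r. tensor_apply A B C T a b c = unit_tensor a b c"
    unfolding restricts_to_unit_def by blast
  then have "unit_restriction T r (row_vec A) (row_vec B) (row_vec C)"
    by (simp add: unit_restriction_def tensor_apply_eq_contract12 unit_tensor_def)
  then show "\<exists>x y z. unit_restriction T r x y z" by blast
next
  assume "\<exists>x y z. unit_restriction T r x y z"
  then obtain x y z where "unit_restriction T r x y z" by blast
  moreover have "row_vec (\<lambda>a i. v a $ i) = v" for v :: "nat \<Rightarrow> real^'n::finite"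
    by (simp add: row_vec_def fun_eq_iff)
  ultimately show "restricts_to_unit T r"
    unfolding restricts_to_unit_def tensor_apply_eq_contract12 unit_tensor_def unit_restriction_def
    by metis
qed

lemma unit_restrictionD:
  "unit_restriction T r x y z \<Longrightarrow> a < r \<Longrightarrow> b < r \<Longrightarrow> c < r \<Longrightarrow>
    contract12 T (x a) (y b) \<bullet> z c = (if a = b \<and> b = c then 1 else 0)"
  unfolding unit_restriction_def by blast

lemma unit_restriction_nonzero:
  assumes "unit_restriction T r x y z" "a < r"
  shows "x a \<noteq> 0" "y a \<noteq> 0" "z a \<noteq> 0"
  using unit_restrictionD[OF assms(1) assms(2) assms(2) assms(2)] by auto

lemma independent_image_if_only_trivial_relation:
  fixes v :: "'b \<Rightarrow> 'a::real_vector"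
  assumes "finite I" and trivial: "\<And>c. (\<Sum>i\<in>I. c i *\<^sub>R v i) = 0 \<Longrightarrow> \<forall>i\<in>I. c i = 0"
  shows "inj_on v I" "independent (v ` I)"
proof -
  show inj: "inj_on v I"
  proof (rule inj_onI, rule ccontr)
    fix i j assume ij: "i \<in> I" "j \<in> I" "v i = v j" "i \<noteq> j"
    define c where "c k = (if k = i then 1 else if k = j then -1 else 0::real)" for k
    have "(\<Sum>k\<in>I. c k *\<^sub>R v k) = (\<Sum>k\<in>{i, j}. c k *\<^sub>R v k)"
      using ij \<open>finite I\<close> by (intro sum.mono_neutral_right) (auto simp: c_def)
    also have "\<dots> = 0" using ij by (simp add: c_def)
    finally have "c i = 0" using trivial ij(1) by blast
    then show False by (simp add: c_def)
  qed
  show "independent (v ` I)"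
  proof
    assume "dependent (v ` I)"
    then obtain u where u: "\<exists>w\<in>v ` I. u w \<noteq> 0" "(\<Sum>w\<in>v ` I. u w *\<^sub>R w) = 0"
      using \<open>finite I\<close> by (auto simp: dependent_finite)
    have "(\<Sum>i\<in>I. u (v i) *\<^sub>R v i) = 0" using u(2) inj by (simp add: sum.reindex)
    then have "\<forall>i\<in>I. u (v i) = 0" by (rule trivial)
    then show False using u(1) by blast
  qed
qed

lemma card_le_DIM_if_only_trivial_relation:
  fixes v :: "'b \<Rightarrow> 'a::euclidean_space"
  assumes "finite I" "\<And>c. (\<Sum>i\<in>I. c i *\<^sub>R v i) = 0 \<Longrightarrow> \<forall>i\<in>I. c i = 0"
  shows "card I \<le> DIM('a)"
  using independent_image_if_only_trivial_relation[OF assms] independent_bound card_image by metis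

lemma biorthogonal_only_trivial_relation:
  fixes v :: "nat \<Rightarrow> 'a::real_vector" and f :: "nat \<Rightarrow> 'a \<Rightarrow> real"
  assumes lin: "\<And>b. linear (f b)"
    and dual: "\<And>a b. a < n \<Longrightarrow> b < n \<Longrightarrow> f b (v a) = (if a = b then 1 else 0)"
    and rel: "(\<Sum>a<n. c a *\<^sub>R v a) = 0"
  shows "\<forall>a<n. c a = 0"
proof (intro allI impI)
  fix b assume "b < n"
  have "0 = f b (\<Sum>a<n. c a *\<^sub>R v a)" using rel linear_0[OF lin] by simp
  also have "\<dots> = (\<Sum>a<n. if a = b then c a else 0)"
    using \<open>b < n\<close> by (simp add: linear_sum[OF lin] linear_scale[OF lin] dual if_distrib[of "\<lambda>x. _ * x"] cong: if_cong)
  also have "\<dots> = c b" using \<open>b < n\<close> by simp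
  finally show "c b = 0" by simp
qed

lemma biorthogonal_card_le_DIM:
  fixes v :: "nat \<Rightarrow> 'a::euclidean_space" and f :: "nat \<Rightarrow> 'a \<Rightarrow> real"
  assumes "\<And>b. linear (f b)" "\<And>a b. a < n \<Longrightarrow> b < n \<Longrightarrow> f b (v a) = (if a = b then 1 else 0)"
  shows "n \<le> DIM('a)"
  using card_le_DIM_if_only_trivial_relation[of "{..<n}" v] biorthogonal_only_trivial_relation[OF assms]
  by simp

lemma biorthogonal_expansion:
  fixes v :: "nat \<Rightarrow> 'a::euclidean_space" and f :: "nat \<Rightarrow> 'a \<Rightarrow> real"
  assumes lin: "\<And>b. linear (f b)"
    and dual: "\<And>a b. a < n \<Longrightarrow> b < n \<Longrightarrow> f b (v a) = (if a = b then 1 else 0)"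
    and "n = DIM('a)"
  shows "u = (\<Sum>a<n. f a u *\<^sub>R v a)"
proof -
  note trivial = biorthogonal_only_trivial_relation[OF lin dual]
  have inj: "inj_on v {..<n}" and indep: "independent (v ` {..<n})"
    using independent_image_if_only_trivial_relation[of "{..<n}" v] trivial by auto
  have "UNIV \<subseteq> span (v ` {..<n})"
    using indep inj \<open>n = DIM('a)\<close> by (intro card_ge_dim_independent) (auto simp: card_image)
  then obtain c where c: "u = (\<Sum>w\<in>v ` {..<n}. c w *\<^sub>R w)"
    by (auto simp: span_finite)
  then have u: "u = (\<Sum>a<n. c (v a) *\<^sub>R v a)" using inj by (simp add: sum.reindex)
  have "f b u = c (v b)" if "b < n" for b
  proof -
    have "f b u = (\<Sum>a<n. if a = b then c (v a) else 0)"
      using that by (subst u) (simp add: linear_sum[OF lin] linear_scale[OF lin] dual if_distrib[of "\<lambda>x. _ * x"] cong: if_cong)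
    then show ?thesis using that by simp
  qed
  then show ?thesis by (subst u) simp
qed

section \<open>Bounds on the subrank\<close>

lemma unit_restriction_le_card:
  fixes T :: "real^'k::finite^'j::finite^'i::finite"
  assumes "unit_restriction T r x y z"
  shows "r \<le> CARD('k)"
proof -
  have "r \<le> DIM(real^'k)"
    by (rule biorthogonal_card_le_DIM[of "\<lambda>c u. u \<bullet> z c" r "\<lambda>c. contract12 T (x c) (y c)"])
      (auto simp: linear_iff inner_add_left unit_restrictionD[OF assms])
  then show ?thesis by simp
qed

lemma restricts_to_unit_le_card:
  fixes T :: "real^'k::finite^'j::finite^'i::finite"
  shows "restricts_to_unit T r \<Longrightarrow> r \<le> CARD('k)"
  by (auto simp: restricts_to_unit_iff dest: unit_restriction_le_card)

lemma restricts_to_unit_mono: "restricts_to_unit T r \<Longrightarrow> r' \<le> r \<Longrightarrow> restricts_to_unit T r'"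
  unfolding restricts_to_unit_def by (meson less_le_trans)

lemma finite_restricts_to_unit: "finite {r. restricts_to_unit T r}"
  by (rule finite_subset[of _ "{..CARD(_)}"]) (auto dest: restricts_to_unit_le_card)

lemma restricts_to_unit_subrank: "restricts_to_unit T (subrank T)"
proof -
  have "restricts_to_unit T 0" unfolding restricts_to_unit_def by simp
  then have "subrank T \<in> {r. restricts_to_unit T r}"
    unfolding subrank_def using finite_restricts_to_unit by (intro Max_in) auto
  then show ?thesis by simp
qed

lemma subrank_ge: "restricts_to_unit T r \<Longrightarrow> r \<le> subrank T"
  unfolding subrank_def using finite_restricts_to_unit by (intro Max_ge) auto

lemma subrank_le_card:
  fixes T :: "real^'k::finite^'j::finite^'i::finite"
  shows "subrank T \<le> CARD('k)"
  using restricts_to_unit_subrank restricts_to_unit_le_card by blast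

lemma subrank_eqI:
  assumes "restricts_to_unit T r" "\<not> restricts_to_unit T (Suc r)"
  shows "subrank T = r"
  using subrank_ge[OF assms(1)] restricts_to_unit_subrank[of T]
    restricts_to_unit_mono[of T "subrank T" "Suc r"] assms(2)
  by fastforce

definition nonsingular_on :: "('a::zero \<Rightarrow> real^'i::finite) \<Rightarrow> real^'k::finite^'j::finite^'i \<Rightarrow> bool" where
  "nonsingular_on L T \<longleftrightarrow> (\<forall>u w. u \<noteq> 0 \<longrightarrow> w \<noteq> 0 \<longrightarrow> contract12 T (L u) w \<noteq> 0)"

text \<open>The \<open>2r - 1\<close> vectors \<open>T(x\<^sub>c, y\<^sub>c)\<close> and \<open>T(x\<^sub>0, y\<^sub>b)\<close>, \<open>0 < b < r\<close>, are independent: pairing a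
  relation with \<open>z\<^sub>d\<close> shows that the coefficients of the first kind vanish, nonsingularity turns the
  rest into a relation \<open>\<Sum>\<^sub>b \<gamma>\<^sub>b y\<^sub>b = 0\<close>, and pairing \<open>T(x\<^sub>d, \<cdot>)\<close> with \<open>z\<^sub>d\<close> shows \<open>\<gamma> = 0\<close>.\<close>
lemma restricts_to_unit_le_if_nonsingular:
  fixes T :: "real^'k::finite^'j::finite^'i::finite"
  assumes ns: "nonsingular_on id T" and "restricts_to_unit T r"
  shows "2 * r \<le> CARD('k) + 1"
proof (cases "r = 0")
  case False
  obtain x y z where R: "unit_restriction T r x y z"
    using assms(2) by (auto simp: restricts_to_unit_iff)
  define I where "I = {..<r} <+> {1..<r}"
  define v where "v = case_sum (\<lambda>c. contract12 T (x c) (y c)) (\<lambda>b. contract12 T (x 0) (y b))"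
  have "card I \<le> DIM(real^'k)"
  proof (rule card_le_DIM_if_only_trivial_relation[of I v])
    show "finite I" by (simp add: I_def)
    fix \<alpha> assume rel: "(\<Sum>i\<in>I. \<alpha> i *\<^sub>R v i) = 0"
    define \<beta> where "\<beta> = \<alpha> \<circ> Inl"
    define \<gamma> where "\<gamma> = \<alpha> \<circ> Inr"
    define ysum where "ysum = (\<Sum>b\<in>{1..<r}. \<gamma> b *\<^sub>R y b)"
    have split: "(\<Sum>i\<in>I. \<alpha> i *\<^sub>R v i) =
        (\<Sum>c<r. \<beta> c *\<^sub>R contract12 T (x c) (y c)) + contract12 T (x 0) ysum"
      by (simp add: I_def v_def ysum_def sum.Plus contract12_sum_right contract12_scaleR_right \<beta>_def \<gamma>_def)
    have \<beta>: "\<beta> d = 0" if "d < r" for d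
    proof -
      have "(\<Sum>c<r. \<beta> c *\<^sub>R contract12 T (x c) (y c)) \<bullet> z d = (\<Sum>c<r. if c = d then \<beta> c else 0)"
        unfolding inner_sum_left by (intro sum.cong) (auto simp: that unit_restrictionD[OF R])
      moreover have "contract12 T (x 0) ysum \<bullet> z d = 0"
        unfolding ysum_def contract12_sum_right inner_sum_left
        by (intro sum.neutral) (auto simp: that contract12_scaleR_right unit_restrictionD[OF R])
      ultimately show ?thesis using arg_cong[OF rel, of "\<lambda>u. u \<bullet> z d"] that
        by (simp add: split inner_add_left)
    qed
    have "x 0 \<noteq> 0" using unit_restriction_nonzero[OF R] False by simp
    moreover have "contract12 T (x 0) ysum = 0" using rel split \<beta> by simp
    ultimately have "ysum = 0" using ns by (auto simp: nonsingular_on_def)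
    have \<gamma>: "\<gamma> d = 0" if "d \<in> {1..<r}" for d
    proof -
      have "contract12 T (x d) ysum \<bullet> z d = (\<Sum>b\<in>{1..<r}. if b = d then \<gamma> b else 0)"
        unfolding ysum_def contract12_sum_right inner_sum_left
        by (intro sum.cong) (use that in \<open>auto simp: contract12_scaleR_right unit_restrictionD[OF R]\<close>)
      then show ?thesis using \<open>ysum = 0\<close> that by simp
    qed
    show "\<forall>i\<in>I. \<alpha> i = 0" using \<beta> \<gamma> by (auto simp: I_def \<beta>_def \<gamma>_def)
  qed
  moreover have "card I = r + (r - 1)" by (simp add: I_def card_Plus)
  ultimately show ?thesis by simp
qed simp

lemma linear_form_on_plane_has_nonzero_root:
  fixes f :: "real \<times> real \<Rightarrow> real"
  assumes "linear f"
  shows "\<exists>p. p \<noteq> 0 \<and> f p = 0"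
proof -
  have f: "f (s, t) = s * f (1, 0) + t * f (0, 1)" for s t
  proof -
    have "f (s *\<^sub>R (1, 0) + t *\<^sub>R (0, 1)) = s * f (1, 0) + t * f (0, 1)"
      unfolding linear_add[OF assms] linear_scale[OF assms] by simp
    then show ?thesis by simp
  qed
  show ?thesis
  proof (cases "f (1, 0) = 0")
    case True
    then show ?thesis by (intro exI[of _ "(1, 0)"]) (simp add: zero_prod_def)
  next
    case False
    then show ?thesis
      using f[of "f (0, 1)" "- f (1, 0)"] by (intro exI[of _ "(f (0, 1), - f (1, 0))"]) (auto simp: zero_prod_def)
  qed
qed

text \<open>For a full restriction the \<open>x\<^sub>a\<close> and the \<open>z\<^sub>c\<close> are bases and \<open>T(u, y\<^sub>0) \<bullet> z\<^sub>c = \<phi>\<^sub>0(u) \<delta>\<^sub>0\<^sub>c\<close>,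
  so \<open>T(\<cdot>, y\<^sub>0)\<close> vanishes on the kernel of the linear form \<open>\<phi>\<^sub>0\<close>, which meets every plane.\<close>
lemma no_full_unit_restriction_if_nonsingular_on_plane:
  fixes T :: "real^'k::finite^'j::finite^'i::finite" and L :: "real \<times> real \<Rightarrow> real^'i"
  assumes "linear L" and ns: "nonsingular_on L T" and "CARD('k) = CARD('i)"
  shows "\<not> restricts_to_unit T CARD('i)"
proof
  let ?n = "CARD('i)"
  assume "restricts_to_unit T ?n"
  then obtain x y z where R: "unit_restriction T ?n x y z" by (auto simp: restricts_to_unit_iff)
  note E = unit_restrictionD[OF R]
  define \<phi> where "\<phi> b u = contract12 T u (y b) \<bullet> z b" for b u
  have x_expansion: "u = (\<Sum>a<?n. \<phi> a u *\<^sub>R x a)" for u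
    by (rule biorthogonal_expansion) (auto simp: \<phi>_def linear_contract12_left_inner E)
  have z_expansion: "u = (\<Sum>a<?n. (contract12 T (x a) (y a) \<bullet> u) *\<^sub>R z a)" for u
    using \<open>CARD('k) = CARD('i)\<close>
    by (intro biorthogonal_expansion) (auto simp: linear_iff inner_add_right E)
  have z_total: "u = 0" if "\<And>c. c < ?n \<Longrightarrow> u \<bullet> z c = 0" for u
  proof -
    have "u \<bullet> u = u \<bullet> (\<Sum>a<?n. (contract12 T (x a) (y a) \<bullet> u) *\<^sub>R z a)"
      by (simp only: z_expansion[of u, symmetric])
    also have "\<dots> = 0" using that by (simp add: inner_sum_right)
    finally show ?thesis by simp
  qed
  have "linear (\<phi> 0 \<circ> L)"
    unfolding \<phi>_def by (intro linear_compose[OF \<open>linear L\<close>] linear_contract12_left_inner)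
  then obtain p where p: "p \<noteq> 0" "\<phi> 0 (L p) = 0"
    using linear_form_on_plane_has_nonzero_root by fastforce
  have "contract12 T (L p) (y 0) \<bullet> z c = 0" if "c < ?n" for c
  proof -
    have "contract12 T (L p) (y 0) \<bullet> z c = (\<Sum>a<?n. \<phi> a (L p) * (contract12 T (x a) (y 0) \<bullet> z c))"
      by (subst x_expansion[of "L p"])
        (simp add: contract12_sum_left contract12_scaleR_left inner_sum_left)
    also have "\<dots> = 0" using that p(2) by (intro sum.neutral) (auto simp: E)
    finally show ?thesis .
  qed
  then have "contract12 T (L p) (y 0) = 0" by (rule z_total)
  moreover have "y 0 \<noteq> 0" using unit_restriction_nonzero[OF R] by simp
  ultimately show False using ns p(1) unfolding nonsingular_on_def by blast
qed

definition rank_one_sum ::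
  "(real^'i::finite^'l::finite) \<times> (real^'j::finite^'l) \<times> (real^'k::finite^'l) \<Rightarrow> real^'k^'j^'i" where
  "rank_one_sum = (\<lambda>(U, V, W). \<chi> i j k. \<Sum>l\<in>UNIV. U$l$i * V$l$j * W$l$k)"

lemma sum3_unit_tensor:
  "(\<Sum>c<n. \<Sum>b<n. \<Sum>a<n. f a b c * (if a = b \<and> b = c then 1 else 0)) = (\<Sum>a<n. f a a (a::nat) :: real)"
proof -
  have "(\<Sum>a<n. f a b c * (if a = b \<and> b = c then 1 else 0)) = (if b = c then f b b b else 0)"
    if "b < n" for b c
    using that by (cases "b = c") (simp_all add: if_distrib[of "\<lambda>x. _ * x"] cong: if_cong)
  then have "(\<Sum>c<n. \<Sum>b<n. \<Sum>a<n. f a b c * (if a = b \<and> b = c then 1 else 0)) =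
      (\<Sum>c<n. \<Sum>b<n. if b = c then f b b b else 0)"
    by (intro sum.cong refl) simp
  then show ?thesis by (simp add: sum.delta)
qed

lemma full_unit_restriction_trilinear:
  fixes T :: "real^'k::finite^'j::finite^'i::finite"
  assumes "CARD('j) = CARD('i)" "CARD('k) = CARD('i)" and R: "unit_restriction T CARD('i) x y z"
  shows "contract12 T u v \<bullet> w = (\<Sum>a<CARD('i).
    (contract12 T u (y a) \<bullet> z a) * (contract12 T (x a) v \<bullet> z a) * (contract12 T (x a) (y a) \<bullet> w))"
proof -
  let ?n = "CARD('i)"
  note E = unit_restrictionD[OF R]
  define \<phi> where "\<phi> a u = contract12 T u (y a) \<bullet> z a" for a u
  define \<beta> where "\<beta> a v = contract12 T (x a) v \<bullet> z a" for a v
  define \<psi> where "\<psi> a w = contract12 T (x a) (y a) \<bullet> w" for a w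
  have x_expansion: "(\<Sum>a<?n. \<phi> a u *\<^sub>R x a) = u"
    by (rule biorthogonal_expansion[symmetric]) (auto simp: \<phi>_def linear_contract12_left_inner E)
  have y_expansion: "(\<Sum>a<?n. \<beta> a v *\<^sub>R y a) = v"
    using assms(1)
    by (intro biorthogonal_expansion[symmetric]) (auto simp: \<beta>_def linear_contract12_right_inner E)
  have z_expansion: "(\<Sum>a<?n. \<psi> a w *\<^sub>R z a) = w"
    using assms(2)
    by (intro biorthogonal_expansion[symmetric]) (auto simp: \<psi>_def linear_iff inner_add_right E)
  have "contract12 T u v \<bullet> w =
      contract12 T (\<Sum>a<?n. \<phi> a u *\<^sub>R x a) (\<Sum>b<?n. \<beta> b v *\<^sub>R y b) \<bullet> (\<Sum>c<?n. \<psi> c w *\<^sub>R z c)"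
    by (simp only: x_expansion y_expansion z_expansion)
  also have "\<dots> = (\<Sum>c<?n. \<Sum>b<?n. \<Sum>a<?n.
      (\<phi> a u * \<beta> b v * \<psi> c w) * (contract12 T (x a) (y b) \<bullet> z c))"
    by (simp add: contract12_sum_left contract12_sum_right contract12_scaleR_left
        contract12_scaleR_right inner_sum_left inner_sum_right sum_distrib_left mult_ac)
  also have "\<dots> = (\<Sum>c<?n. \<Sum>b<?n. \<Sum>a<?n.
      (\<phi> a u * \<beta> b v * \<psi> c w) * (if a = b \<and> b = c then 1 else 0))"
    by (intro sum.cong refl) (simp add: E)
  finally show ?thesis by (simp only: sum3_unit_tensor \<phi>_def \<beta>_def \<psi>_def)
qed

lemma full_unit_restriction_rank_one_sum:
  fixes T :: "real^'k::finite^'j::finite^'i::finite"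
  assumes "CARD('j) = CARD('i)" "CARD('k) = CARD('i)" "restricts_to_unit T CARD('i)"
  shows "T \<in> range (rank_one_sum :: (real^'i^'i) \<times> (real^'j^'i) \<times> (real^'k^'i) \<Rightarrow> _)"
proof -
  let ?n = "CARD('i)"
  obtain x y z where R: "unit_restriction T ?n x y z"
    using assms(3) by (auto simp: restricts_to_unit_iff)
  define \<phi> where "\<phi> a u = contract12 T u (y a) \<bullet> z a" for a u
  define \<beta> where "\<beta> a v = contract12 T (x a) v \<bullet> z a" for a v
  define \<psi> where "\<psi> a w = contract12 T (x a) (y a) \<bullet> w" for a w
  obtain h where h: "bij_betw h {..<?n} (UNIV :: 'i set)"
    using ex_bij_betw_nat_finite[of "UNIV :: 'i set"] by (auto simp: atLeast0LessThan)
  define g where "g = inv_into {..<?n} h"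
  have reindex: "(\<Sum>l\<in>UNIV. f (g l)) = (\<Sum>a<?n. f a)" for f :: "nat \<Rightarrow> real"
    using sum.reindex_bij_betw[OF h, of "\<lambda>l. f (g l)"] h
    by (simp add: g_def bij_betw_inv_into_left)
  have "(\<Sum>l\<in>UNIV. \<phi> (g l) (axis i 1) * \<beta> (g l) (axis j 1) * \<psi> (g l) (axis k 1)) = T$i$j$k" for i j k
    using reindex[of "\<lambda>a. \<phi> a (axis i 1) * \<beta> a (axis j 1) * \<psi> a (axis k 1)"]
    by (simp add: \<phi>_def \<beta>_def \<psi>_def full_unit_restriction_trilinear[OF assms(1,2) R, symmetric]
        tensor_entry_eq_contract12[symmetric])
  then have "rank_one_sum (\<chi> l i. \<phi> (g l) (axis i 1), \<chi> l j. \<beta> (g l) (axis j 1), \<chi> l k. \<psi> (g l) (axis k 1)) = T"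
    by (simp add: rank_one_sum_def vec_eq_iff)
  then show ?thesis by (metis rangeI)
qed

lemma has_derivative_vec_lambda:
  fixes f :: "'a::real_normed_vector \<Rightarrow> 'n::finite \<Rightarrow> 'b::real_normed_vector"
  assumes "\<And>i. ((\<lambda>x. f x i) has_derivative (\<lambda>h. f' h i)) F"
  shows "((\<lambda>x. \<chi> i. f x i) has_derivative (\<lambda>h. \<chi> i. f' h i)) F"
proof -
  have axis_linear: "bounded_linear (\<lambda>x::'b. axis i x :: 'b^'n)" for i
  proof (rule bounded_linear_intro[where K = 1])
    show "norm (axis i x :: 'b^'n) \<le> norm x * 1" for x
    proof -
      have "norm (axis i x :: 'b^'n) \<le> (\<Sum>j\<in>UNIV. norm ((axis i x :: 'b^'n) $ j))"
        unfolding norm_vec_def by (rule L2_set_le_sum) simp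
      also have "\<dots> = norm x" by (simp add: axis_def if_distrib cong: if_cong)
      finally show ?thesis by simp
    qed
  qed (simp_all add: axis_def vec_eq_iff)
  have "((\<lambda>x. \<Sum>i\<in>UNIV. axis i (f x i)) has_derivative (\<lambda>h. \<Sum>i\<in>UNIV. axis i (f' h i))) F"
    by (intro has_derivative_sum bounded_linear.has_derivative[OF axis_linear] assms)
  moreover have "(\<chi> i. g i) = (\<Sum>i\<in>UNIV. axis i (g i) :: 'b^'n)" for g
    by (simp add: vec_eq_iff axis_def sum_component if_distrib cong: if_cong)
  ultimately show ?thesis by simp
qed

lemma differentiable_vec_lambda:
  fixes f :: "'a::real_normed_vector \<Rightarrow> 'n::finite \<Rightarrow> 'b::real_normed_vector"
  assumes "\<And>i. (\<lambda>x. f x i) differentiable F"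
  shows "(\<lambda>x. \<chi> i. f x i) differentiable F"
proof -
  obtain f' where "\<And>i. ((\<lambda>x. f x i) has_derivative f' i) F"
    using assms unfolding differentiable_def by metis
  then show ?thesis
    unfolding differentiable_def using has_derivative_vec_lambda[of f "\<lambda>h i. f' i h" F] by blast
qed

lemma has_derivative_vec_nth [derivative_intros]:
  "(f has_derivative f') F \<Longrightarrow> ((\<lambda>x. f x $ i) has_derivative (\<lambda>h. f' h $ i)) F"
  by (rule bounded_linear.has_derivative[OF bounded_linear_vec_nth])

lemma negligible_range_rank_one_sum:
  assumes "CARD('l) * (CARD('i) + CARD('j) + CARD('k)) < CARD('i) * CARD('j) * CARD('k)"
  shows "negligible (range (rank_one_sum :: (real^'i::finite^'l::finite) \<times> (real^'j::finite^'l) \<times> (real^'k::finite^'l) \<Rightarrow> _))"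
proof (rule negligible_differentiable_image_lowdim)
  show "DIM((real^'i^'l) \<times> (real^'j^'l) \<times> (real^'k^'l)) < DIM(real^'k^'j^'i)"
    using assms by (simp add: algebra_simps)
  show "rank_one_sum differentiable_on UNIV"
    unfolding rank_one_sum_def differentiable_on_def case_prod_beta
    by (intro ballI differentiable_vec_lambda differentiable_sum differentiable_mult
        bounded_linear_imp_differentiable bounded_linear_compose[OF bounded_linear_vec_nth]
        bounded_linear_fst bounded_linear_snd bounded_linear_compose[OF bounded_linear_fst]
        bounded_linear_compose[OF bounded_linear_snd]) auto
qed

section \<open>Subrank at least 2 is dense\<close>

definition slice_matrix :: "real^'k::finite^4^'i::finite \<Rightarrow> real^'i \<Rightarrow> real^'i \<Rightarrow> real^'k \<Rightarrow> real^'k \<Rightarrow> real^4^4" where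
  "slice_matrix T x0 x1 z0 z1 = (\<chi> r. if r = 1 then contract13 T x0 z0 else if r = 2 then contract13 T x0 z1
      else if r = 3 then contract13 T x1 z0 else contract13 T x1 z1)"

lemma restricts_to_unit_2_if_invertible_slice_matrix:
  fixes T :: "real^'k::finite^4^'i::finite"
  assumes "invertible (slice_matrix T x0 x1 z0 z1)"
  shows "restricts_to_unit T 2"
proof -
  let ?V = "slice_matrix T x0 x1 z0 z1"
  obtain W where W: "?V ** W = mat 1" using assms unfolding invertible_def by blast
  have V: "?V *v (W *v axis r 1) = axis r 1" for r
    by (simp add: matrix_vector_mul_assoc W)
  have rows: "contract13 T x0 z0 \<bullet> y = (?V *v y)$1" "contract13 T x0 z1 \<bullet> y = (?V *v y)$2"
     "contract13 T x1 z0 \<bullet> y = (?V *v y)$3" "contract13 T x1 z1 \<bullet> y = (?V *v y)$4" for y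
    by (simp_all add: matrix_vector_mul_component slice_matrix_def)
  define x where "x a = (if a = 0 then x0 else x1)" for a :: nat
  define y where "y b = W *v axis (if b = 0 then 1 else 4) 1" for b :: nat
  define z where "z c = (if c = 0 then z0 else z1)" for c :: nat
  have Vy: "?V *v y b = axis (if b = 0 then 1 else 4) 1" for b
    by (simp add: y_def V)
  have "unit_restriction T 2 x y z"
    unfolding unit_restriction_def contract12_inner_eq_contract13_inner
    by (auto simp: less_2_cases_iff x_def z_def rows Vy axis_def)
  then show ?thesis by (auto simp: restricts_to_unit_iff)
qed

lemma det_add_scaleR_mat_poly:
  fixes M :: "real^'n::finite^'n"
  shows "\<exists>P. \<forall>s. det (M + s *\<^sub>R mat 1) = poly P s"
proof -
  define P where "P = (\<Sum>p | p permutes (UNIV::'n set). smult (of_int (sign p))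
      (\<Prod>i\<in>UNIV. [:M$i$p i, if p i = i then 1 else 0:]))"
  have "det (M + s *\<^sub>R mat 1) = poly P s" for s
    unfolding det_def P_def poly_sum poly_smult poly_prod
    by (intro sum.cong refl arg_cong[where f="\<lambda>x. _ * x"] prod.cong) (auto simp: mat_def)
  then show ?thesis by blast
qed

lemma invertible_add_scaleR_mat_if_large:
  fixes M :: "real^'n::finite^'n"
  assumes "s > (\<Sum>i\<in>UNIV. \<Sum>j\<in>UNIV. \<bar>M $ i $ j\<bar>)"
  shows "invertible (M + s *\<^sub>R mat 1)"
proof -
  have "0 \<le> (\<Sum>i\<in>UNIV. \<Sum>j\<in>UNIV. \<bar>M $ i $ j\<bar>)" by (simp add: sum_nonneg)
  then have "s > 0" using assms by linarith
  have "w = 0" if w: "(M + s *\<^sub>R mat 1) *v w = 0" for w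
  proof (rule ccontr)
    assume "w \<noteq> 0"
    have "M *v w = - (s *\<^sub>R w)" using w
      by (simp add: matrix_vector_mult_add_rdistrib scaleR_matrix_vector_assoc[symmetric] eq_neg_iff_add_eq_0)
    then have "s * norm w = norm (M *v w)" using \<open>s > 0\<close> by simp
    also have "\<dots> \<le> onorm ((*v) M) * norm w"
      by (rule onorm) (rule matrix_vector_mul_bounded_linear)
    also have "\<dots> \<le> (\<Sum>i\<in>UNIV. \<Sum>j\<in>UNIV. \<bar>M $ i $ j\<bar>) * norm w"
      by (rule mult_right_mono[OF onorm_le_matrix_component_sum]) simp
    finally show False using assms \<open>w \<noteq> 0\<close> by (simp add: mult_le_cancel_right)
  qed
  then show ?thesis
    unfolding invertible_left_inverse matrix_left_invertible_ker by blast
qed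

lemma invertible_add_small_scaleR_mat:
  fixes M :: "real^'n::finite^'n"
  assumes "d > 0"
  shows "\<exists>s. 0 < s \<and> s < d \<and> invertible (M + s *\<^sub>R mat 1)"
proof -
  obtain P where P: "\<And>s. det (M + s *\<^sub>R mat 1) = poly P s" using det_add_scaleR_mat_poly by blast
  define s0 where "s0 = (\<Sum>i\<in>UNIV. \<Sum>j\<in>UNIV. \<bar>M $ i $ j\<bar>) + 1"
  have "invertible (M + s0 *\<^sub>R mat 1)" by (rule invertible_add_scaleR_mat_if_large) (simp add: s0_def)
  then have "poly P s0 \<noteq> 0" using P invertible_det_nz by metis
  then have "finite {s. poly P s = 0}" by (intro poly_roots_finite) auto
  moreover have "infinite {0<..<d}" using assms by simp
  ultimately obtain s where "s \<in> {0<..<d}" "s \<notin> {s. poly P s = 0}"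
    by (meson finite_subset subsetI)
  then show ?thesis using P invertible_det_nz by (metis greaterThanLessThan_iff mem_Collect_eq)
qed

definition slice_identity_tensor :: "real^4^4^4" where
  "slice_identity_tensor = (\<chi> i j k. if (i = 1 \<and> k = 1 \<and> j = 1) \<or> (i = 1 \<and> k = 2 \<and> j = 2)
     \<or> (i = 2 \<and> k = 1 \<and> j = 3) \<or> (i = 2 \<and> k = 2 \<and> j = 4) then 1 else 0)"

lemma contract13_axis: "contract13 T (axis a 1) (axis c 1) = (\<chi> j. T $ a $ j $ c)"
  unfolding contract13_def by (simp add: vec_eq_iff mult.assoc sum_distrib_left[symmetric] sum_axis_mult)

lemma slice_matrix_add_slice_identity_tensor:
  "slice_matrix (T + s *\<^sub>R slice_identity_tensor) (axis 1 1) (axis 2 1) (axis 1 1) (axis 2 1) =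
     slice_matrix T (axis 1 1) (axis 2 1) (axis 1 1) (axis 2 1) + s *\<^sub>R mat 1"
  unfolding slice_matrix_def contract13_axis
  by (simp add: vec_eq_iff forall_4 slice_identity_tensor_def mat_def)

lemma dense_restricts_to_unit_2:
  fixes T0 :: "real^4^4^4"
  assumes "e > 0"
  shows "\<exists>T. dist T T0 < e \<and> restricts_to_unit T 2"
proof -
  define d where "d = e / (norm slice_identity_tensor + 1)"
  have pos: "norm slice_identity_tensor + 1 > 0" by (simp add: add_nonneg_pos)
  then have "d > 0" using assms by (simp add: d_def)
  then obtain s where s: "0 < s" "s < d"
      "invertible (slice_matrix T0 (axis 1 1) (axis 2 1) (axis 1 1) (axis 2 1) + s *\<^sub>R mat 1)"
    using invertible_add_small_scaleR_mat by blast
  let ?T = "T0 + s *\<^sub>R slice_identity_tensor"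
  have "restricts_to_unit ?T 2"
    using s(3) slice_matrix_add_slice_identity_tensor[of T0 s]
    by (intro restricts_to_unit_2_if_invertible_slice_matrix[of _ "axis 1 1" "axis 2 1" "axis 1 1" "axis 2 1"]) simp
  moreover have "dist ?T T0 < e"
  proof -
    have "dist ?T T0 = s * norm slice_identity_tensor" using s(1) by (simp add: dist_norm)
    also have "\<dots> \<le> d * norm slice_identity_tensor" using s by (simp add: mult_right_mono)
    also have "\<dots> < e" using assms pos by (simp add: d_def field_simps)
    finally show ?thesis .
  qed
  ultimately show ?thesis by blast
qed

section \<open>Conditions that persist near a tensor\<close>

lemma open_nonsingular_on:
  fixes L :: "'a::euclidean_space \<Rightarrow> real^'i::finite"
  assumes "linear L"
  shows "open {T :: real^'k::finite^'j::finite^'i. nonsingular_on L T}"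
proof (subst open_subopen, intro ballI)
  fix T0 :: "real^'k^'j^'i" assume "T0 \<in> {T. nonsingular_on L T}"
  then have ns0: "nonsingular_on L T0" by simp
  let ?K = "sphere (0::'a) 1 \<times> sphere (0::real^'j) 1"
  define h where "h p = contract12 (fst p) (L (fst (snd p))) (snd (snd p))"
    for p :: "(real^'k^'j^'i) \<times> 'a \<times> (real^'j)"
  have "continuous_on UNIV L"
    using assms by (simp add: linear_continuous_on linear_conv_bounded_linear)
  then have "continuous_on UNIV (\<lambda>p::(real^'k^'j^'i) \<times> 'a \<times> (real^'j). L (fst (snd p)))"
    by (rule continuous_on_compose2) (auto intro!: continuous_intros)
  then have "continuous_on UNIV h"
    unfolding h_def contract12_def by (intro continuous_intros)
  then have "open (h -` (- {0}))" by (intro open_vimage) auto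
  moreover have "compact ?K" by (intro compact_Times compact_sphere)
  moreover have "{T0} \<times> ?K \<subseteq> h -` (- {0})"
    using ns0 unfolding nonsingular_on_def h_def by clarsimp (metis norm_zero zero_neq_one)
  ultimately obtain X where X: "T0 \<in> X" "open X" "X \<times> ?K \<subseteq> h -` (- {0})"
    using Elementary_Topology.tube_lemma[of ?K "h -` (- {0})" T0] by blast
  have "nonsingular_on L T" if "T \<in> X" for T
    unfolding nonsingular_on_def
  proof (intro allI impI)
    fix u w assume "u \<noteq> (0::'a)" "w \<noteq> (0::real^'j)"
    then have "(T, u /\<^sub>R norm u, w /\<^sub>R norm w) \<in> X \<times> ?K" using that by simp
    then have "(T, u /\<^sub>R norm u, w /\<^sub>R norm w) \<in> h -` (- {0})" using X(3) by blast
    then have "contract12 T (L (u /\<^sub>R norm u)) (w /\<^sub>R norm w) \<noteq> 0" by (simp add: h_def)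
    then show "contract12 T (L u) w \<noteq> 0"
      by (simp add: linear_scale[OF assms] contract12_scaleR_left contract12_scaleR_right)
  qed
  then show "\<exists>X. open X \<and> T0 \<in> X \<and> X \<subseteq> {T. nonsingular_on L T}"
    using X by blast
qed

lemma open_invertible_slice_matrix:
  "open {T :: real^'k::finite^4^'i::finite. invertible (slice_matrix T x0 x1 z0 z1)}"
proof -
  have "continuous_on UNIV (\<lambda>T::real^'k^4^'i. slice_matrix T x0 x1 z0 z1 $ i $ j)" for i j
    unfolding slice_matrix_def contract13_def
    by (cases "i = 1"; cases "i = 2"; cases "i = 3") (simp_all; intro continuous_intros)+
  then have "continuous_on UNIV (\<lambda>T::real^'k^4^'i. det (slice_matrix T x0 x1 z0 z1))"
    unfolding det_def
    by (intro continuous_on_sum continuous_on_mult[OF continuous_on_const] continuous_on_prod) auto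
  then have "open ((\<lambda>T::real^'k^4^'i. det (slice_matrix T x0 x1 z0 z1)) -` (- {0}))"
    by (intro open_vimage) auto
  then show ?thesis by (simp add: invertible_det_nz vimage_def)
qed

definition restriction_map ::
  "real^'i::finite^'r::finite \<Rightarrow> real^'j::finite^'r \<Rightarrow> real^'k::finite^'r \<Rightarrow> real^'k^'j^'i \<Rightarrow> real^'r^'r^'r" where
  "restriction_map A B C T =
     (\<chi> a b c. \<Sum>i\<in>UNIV. \<Sum>j\<in>UNIV. \<Sum>k\<in>UNIV. A$a$i * B$b$j * C$c$k * T$i$j$k)"

definition unit_cube :: "real^'r::finite^'r^'r" where
  "unit_cube = (\<chi> a b c. if a = b \<and> b = c then 1 else 0)"

lemma restricts_to_unit_if_restriction_map_eq_unit_cube: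
  fixes A :: "real^'i::finite^'r::finite" and B :: "real^'j::finite^'r" and C :: "real^'k::finite^'r"
  assumes "restriction_map A B C T = unit_cube"
  shows "restricts_to_unit T CARD('r)"
proof -
  obtain h where h: "bij_betw h {..<CARD('r)} (UNIV :: 'r set)"
    using ex_bij_betw_nat_finite[of "UNIV :: 'r set"] by (auto simp: atLeast0LessThan)
  have "unit_restriction T CARD('r) (\<lambda>a. A $ h a) (\<lambda>b. B $ h b) (\<lambda>c. C $ h c)"
    unfolding unit_restriction_def
  proof (intro allI impI)
    fix a b c assume abc: "a < CARD('r)" "b < CARD('r)" "c < CARD('r)"
    have "contract12 T (A $ h a) (B $ h b) \<bullet> C $ h c = restriction_map A B C T $ h a $ h b $ h c"
      by (simp add: contract12_inner restriction_map_def)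
    also have "\<dots> = (if a = b \<and> b = c then 1 else 0)"
      using abc bij_betw_imp_inj_on[OF h] by (simp add: assms unit_cube_def inj_on_eq_iff)
    finally show "contract12 T (A $ h a) (B $ h b) \<bullet> C $ h c = (if a = b \<and> b = c then 1 else 0)" .
  qed
  then show ?thesis by (auto simp: restricts_to_unit_iff)
qed

lemma linear_restriction_map: "linear (restriction_map A B C)"
  by (rule linearI) (simp_all add: restriction_map_def vec_eq_iff sum.distrib sum_distrib_left algebra_simps)

lemma has_derivative_restriction_map:
  "((\<lambda>((A, B, C), T). restriction_map A B C T) has_derivative
     (\<lambda>((dA, dB, dC), dT). restriction_map dA B0 C0 T0 + restriction_map A0 dB C0 T0
        + restriction_map A0 B0 dC T0 + restriction_map A0 B0 C0 dT)) (at ((A0, B0, C0), T0))"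
proof -
  have "((\<lambda>p. restriction_map (fst (fst p)) (fst (snd (fst p))) (snd (snd (fst p))) (snd p)) has_derivative
     (\<lambda>q. \<chi> a b c. \<Sum>i\<in>UNIV. \<Sum>j\<in>UNIV. \<Sum>k\<in>UNIV.
        fst (fst q) $a$i * B0$b$j * C0$c$k * T0$i$j$k + A0$a$i * fst (snd (fst q)) $b$j * C0$c$k * T0$i$j$k
        + A0$a$i * B0$b$j * snd (snd (fst q)) $c$k * T0$i$j$k + A0$a$i * B0$b$j * C0$c$k * snd q $i$j$k))
     (at ((A0, B0, C0), T0))"
    unfolding restriction_map_def
    by (intro has_derivative_vec_lambda) (auto intro!: derivative_eq_intros simp: algebra_simps sum.distrib)
  then show ?thesis
    by (simp add: case_prod_unfold restriction_map_def vec_eq_iff sum.distrib plus_vec_def)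
qed

text \<open>Since \<open>R\<close> inverts the partial derivative in \<open>(A, B, C)\<close> from the right, the map
  \<open>(A, B, C, T) \<mapsto> (restriction_map A B C T, T)\<close> is a submersion at \<open>(A\<^sub>0, B\<^sub>0, C\<^sub>0, T\<^sub>0)\<close> and hence
  open there.\<close>
lemma restricts_to_unit_near_submersion:
  fixes A0 :: "real^'i::finite^'r::finite" and B0 :: "real^'j::finite^'r" and C0 :: "real^'k::finite^'r"
    and T0 :: "real^'k^'j^'i" and R :: "real^'r^'r^'r \<Rightarrow> (real^'i^'r) \<times> (real^'j^'r) \<times> (real^'k^'r)"
  assumes unit: "restriction_map A0 B0 C0 T0 = unit_cube"
    and "linear R"
    and right_inverse: "\<And>W. restriction_map (fst (R W)) B0 C0 T0 + restriction_map A0 (fst (snd (R W))) C0 T0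
      + restriction_map A0 B0 (snd (snd (R W))) T0 = W"
  shows "\<exists>e>0. \<forall>T. dist T T0 < e \<longrightarrow> restricts_to_unit T CARD('r)"
proof -
  define G :: "((real^'i^'r) \<times> (real^'j^'r) \<times> (real^'k^'r)) \<times> (real^'k^'j^'i) \<Rightarrow> (real^'r^'r^'r) \<times> (real^'k^'j^'i)"
    where "G = (\<lambda>((A, B, C), T). (restriction_map A B C T, T))"
  define G' where "G' = (\<lambda>((dA, dB, dC), dT). (restriction_map dA B0 C0 T0 + restriction_map A0 dB C0 T0
        + restriction_map A0 B0 dC T0 + restriction_map A0 B0 C0 dT, dT))"
  define g where "g = (\<lambda>(W, dT). (R (W - restriction_map A0 B0 C0 dT), dT))"
  have "(G has_derivative G') (at ((A0, B0, C0), T0))"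
    using has_derivative_Pair[OF has_derivative_restriction_map has_derivative_snd[OF has_derivative_ident]]
    by (simp add: G_def G'_def case_prod_unfold)
  moreover have "continuous_on UNIV G"
    unfolding G_def case_prod_unfold restriction_map_def by (intro continuous_intros)
  moreover have "bounded_linear g"
  proof -
    have R: "bounded_linear R" and F: "bounded_linear (restriction_map A0 B0 C0)"
      using \<open>linear R\<close> linear_restriction_map by (simp_all add: linear_conv_bounded_linear)
    have "bounded_linear (\<lambda>p. R (fst p - restriction_map A0 B0 C0 (snd p)))"
      by (rule bounded_linear_compose[OF R bounded_linear_sub[OF bounded_linear_fst
            bounded_linear_compose[OF F bounded_linear_snd]]])
    then show ?thesis
      unfolding g_def case_prod_unfold by (rule bounded_linear_Pair[OF _ bounded_linear_snd])
  qed
  moreover have "G' \<circ> g = id"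
    by (auto simp: fun_eq_iff G'_def g_def case_prod_unfold right_inverse)
  ultimately have "G ((A0, B0, C0), T0) \<in> interior (range G)"
    by (intro sussmann_open_mapping[of UNIV]) auto
  then obtain e where e: "e > 0" "ball (unit_cube, T0) e \<subseteq> range G"
    by (auto simp: G_def unit mem_interior)
  have "restricts_to_unit T CARD('r)" if "dist T T0 < e" for T
  proof -
    have "(unit_cube, T) \<in> ball (unit_cube, T0) e" using that by (simp add: dist_Pair_Pair dist_commute)
    then obtain A B C T' where "G ((A, B, C), T') = (unit_cube, T)" using e(2) by (auto simp: image_iff)
    then have "restriction_map A B C T = unit_cube" by (auto simp: G_def)
    then show ?thesis by (rule restricts_to_unit_if_restriction_map_eq_unit_cube)
  qed
  then show ?thesis using e(1) by blast
qed

lemma typical_subrankI: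
  fixes U :: "(real^'k::finite^'j::finite^'i::finite) set"
  assumes "open U" "U \<noteq> {}" "\<And>T. T \<in> U \<Longrightarrow> restricts_to_unit T r \<and> \<not> restricts_to_unit T (Suc r)"
  shows "typical_subrank TYPE(real^'k^'j^'i) r"
  unfolding typical_subrank_def using assms subrank_eqI by blast

lemma typical_subrank_le_card:
  assumes "typical_subrank TYPE(real^'k::finite^'j::finite^'i::finite) r"
  shows "r \<le> CARD('k)"
proof -
  obtain T :: "real^'k^'j^'i" where "subrank T = r"
    using assms unfolding typical_subrank_def by blast
  then show ?thesis using subrank_le_card[of T] by simp
qed

lemma typical_subrank_ge_if_dense:
  assumes dense: "\<And>T0 e. e > 0 \<Longrightarrow> \<exists>T::real^'k::finite^'j::finite^'i::finite. dist T T0 < e \<and> restricts_to_unit T m"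
    and "typical_subrank TYPE(real^'k^'j^'i) r"
  shows "m \<le> r"
proof -
  obtain U :: "(real^'k^'j^'i) set" where U: "open U" "U \<noteq> {}" "\<forall>T\<in>U. subrank T = r"
    using assms(2) unfolding typical_subrank_def by blast
  obtain T0 e where "e > 0" "ball T0 e \<subseteq> U"
    using U(1,2) open_contains_ball by blast
  moreover obtain T where "dist T T0 < e" "restricts_to_unit T m"
    using dense[OF \<open>e > 0\<close>] by blast
  ultimately show ?thesis using U(3) subrank_ge by (fastforce simp: dist_commute)
qed

lemma not_typical_subrank_if_negligible:
  assumes "negligible {T :: real^'k::finite^'j::finite^'i::finite. restricts_to_unit T r}"
  shows "\<not> typical_subrank TYPE(real^'k^'j^'i) r"
proof
  assume "typical_subrank TYPE(real^'k^'j^'i) r"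
  then obtain U :: "(real^'k^'j^'i) set" where U: "open U" "U \<noteq> {}" "\<forall>T\<in>U. subrank T = r"
    unfolding typical_subrank_def by blast
  then have "U \<subseteq> {T. restricts_to_unit T r}" using restricts_to_unit_subrank by force
  then show False using negligible_subset[OF assms] open_not_negligible[OF U(1,2)] by blast
qed

lemma not_typical_full_subrank:
  assumes "CARD('j) = CARD('i)" "CARD('k) = CARD('i)" "3 < CARD('i)"
  shows "\<not> typical_subrank TYPE(real^'k::finite^'j::finite^'i::finite) CARD('i)"
proof (rule not_typical_subrank_if_negligible)
  let ?n = "CARD('i)"
  have "?n * (3 * ?n) < ?n * (?n * ?n)"
    using assms(3) by (intro mult_strict_left_mono mult_strict_right_mono) auto
  then have "negligible (range (rank_one_sum :: (real^'i^'i) \<times> (real^'j^'i) \<times> (real^'k^'i) \<Rightarrow> _))"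
    using assms by (intro negligible_range_rank_one_sum) (simp add: algebra_simps numeral_3_eq_3)
  then show "negligible {T :: real^'k^'j^'i. restricts_to_unit T ?n}"
    using full_unit_restriction_rank_one_sum[OF assms(1,2)] by (blast intro: negligible_subset)
qed

section \<open>Subrank 2 near the quaternion multiplication tensor\<close>

definition quaternion_product :: "real^4 \<Rightarrow> real^4 \<Rightarrow> real^4" where
  "quaternion_product x y = (\<chi> c. if c = 1 then x$1*y$1 - x$2*y$2 - x$3*y$3 - x$4*y$4
     else if c = 2 then x$1*y$2 + x$2*y$1 + x$3*y$4 - x$4*y$3
     else if c = 3 then x$1*y$3 - x$2*y$4 + x$3*y$1 + x$4*y$2
     else x$1*y$4 + x$2*y$3 - x$3*y$2 + x$4*y$1)"

definition quaternion_conj :: "real^4 \<Rightarrow> real^4" where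
  "quaternion_conj x = (\<chi> c. if c = 1 then x$1 else - x$c)"

definition quaternion_tensor :: "real^4^4^4" where
  "quaternion_tensor = (\<chi> a b c. quaternion_product (axis a 1) (axis b 1) $ c)"

lemma contract12_quaternion_tensor: "contract12 quaternion_tensor x y = quaternion_product x y"
  unfolding contract12_def quaternion_tensor_def
  by (simp add: vec_eq_iff forall_4 sum_4 quaternion_product_def axis_def algebra_simps)

lemma quaternion_conj_product:
  "quaternion_product (quaternion_conj x) (quaternion_product x y) = (x \<bullet> x) *\<^sub>R y"
  by (simp add: vec_eq_iff forall_4 quaternion_product_def quaternion_conj_def inner_vec_def sum_4 algebra_simps)

lemma quaternion_product_zero_right: "quaternion_product x 0 = 0"
  by (simp add: quaternion_product_def vec_eq_iff)

lemma nonsingular_on_quaternion_tensor: "nonsingular_on id quaternion_tensor"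
  unfolding nonsingular_on_def
proof (intro allI impI notI)
  fix x y :: "real^4" assume "x \<noteq> 0" "y \<noteq> 0" "contract12 quaternion_tensor (id x) y = 0"
  then have "(x \<bullet> x) *\<^sub>R y = 0"
    using quaternion_conj_product[of x y]
    by (simp add: contract12_quaternion_tensor quaternion_product_zero_right)
  then show False using \<open>x \<noteq> 0\<close> \<open>y \<noteq> 0\<close> by simp
qed

lemma invertible_slice_matrix_quaternion_tensor:
  "invertible (slice_matrix quaternion_tensor (axis 1 1) (axis 2 1) (axis 1 1) (axis 3 1))"
  (is "invertible ?V")
  unfolding invertible_left_inverse
proof
  show "transpose ?V ** ?V = mat 1"
    unfolding slice_matrix_def contract13_axis quaternion_tensor_def
    by (simp add: vec_eq_iff forall_4 sum_4 matrix_matrix_mult_def transpose_def mat_def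
        quaternion_product_def axis_def)
qed

lemma typical_subrank_2: "typical_subrank TYPE(real^4^4^4) 2"
proof (rule typical_subrankI)
  let ?U = "{T :: real^4^4^4. nonsingular_on id T} \<inter>
    {T. invertible (slice_matrix T (axis 1 1) (axis 2 1) (axis 1 1) (axis 3 1))}"
  show "open ?U"
    using open_nonsingular_on[OF linear_id] open_invertible_slice_matrix by (rule open_Int)
  have "quaternion_tensor \<in> ?U"
    using nonsingular_on_quaternion_tensor invertible_slice_matrix_quaternion_tensor by simp
  then show "?U \<noteq> {}" by blast
  fix T assume T: "T \<in> ?U"
  then have "restricts_to_unit T 2"
    by (auto intro: restricts_to_unit_2_if_invertible_slice_matrix)
  moreover have "\<not> restricts_to_unit T 3"
    using T restricts_to_unit_le_if_nonsingular[of T 3] by auto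
  ultimately show "restricts_to_unit T 2 \<and> \<not> restricts_to_unit T (Suc 2)"
    by (simp add: numeral_3_eq_3)
qed

section \<open>Subrank 3 near a tensor that is nonsingular on a plane\<close>

definition succ3 :: "4 \<Rightarrow> 4" where
  "succ3 j = (if j = 1 then 2 else if j = 2 then 3 else 1)"

definition subrank3_coeff :: "4 \<Rightarrow> 4 \<Rightarrow> 4 \<Rightarrow> real" where
  "subrank3_coeff i j k =
    (if i \<noteq> 4 \<and> j \<noteq> 4 \<and> k \<noteq> 4 then (if i = j \<and> j = k then 1 else 0)
     else if i = 4 \<and> j \<noteq> 4 \<and> k \<noteq> 4 then (if k = succ3 j then 1 else 0)
     else if i \<noteq> 4 \<and> j = 4 \<and> k \<noteq> 4 then (if k = succ3 i then 1 else if k = succ3 (succ3 i) then -1 else 0)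
     else if i \<noteq> 4 \<and> j \<noteq> 4 \<and> k = 4 then 0
     else if i \<noteq> 4 \<and> j = 4 \<and> k = 4 then (if i = 1 then 1 else 0)
     else if i = 4 \<and> j \<noteq> 4 \<and> k = 4 then (if j = 1 then 1 else 0)
     else if i = 4 \<and> j = 4 \<and> k \<noteq> 4 then (if k = 1 then -2 else -1)
     else 0)"

definition subrank3_tensor :: "real^4^4^4" where
  "subrank3_tensor = (\<chi> i j k. subrank3_coeff i j k)"

definition subrank3_pencil :: "real^4 \<Rightarrow> real^4" where
  "subrank3_pencil w = (\<chi> k. \<Sum>j\<in>UNIV. w$j * subrank3_coeff 4 j k)"

definition subrank3_plane :: "real \<times> real \<Rightarrow> real^4" where
  "subrank3_plane p = fst p *\<^sub>R (axis 1 1 + axis 2 1 + axis 3 1) + snd p *\<^sub>R axis 4 1"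

lemma linear_subrank3_plane: "linear subrank3_plane"
  by (rule linearI) (simp_all add: subrank3_plane_def algebra_simps)

lemma contract12_subrank3_plane:
  "contract12 subrank3_tensor (subrank3_plane (s, t)) w = s *\<^sub>R w + t *\<^sub>R subrank3_pencil w"
  unfolding contract12_def subrank3_tensor_def subrank3_pencil_def subrank3_plane_def
  by (simp add: vec_eq_iff forall_4 sum_4 axis_def subrank3_coeff_def succ3_def algebra_simps)

text \<open>The pencil \<open>N\<close> satisfies \<open>(N\<^sup>2 + 1)\<^sup>2 = 0\<close>, so \<open>(s - tN)(s\<^sup>2 + 2t\<^sup>2 + t\<^sup>2N\<^sup>2)\<close> inverts
  \<open>s + tN\<close> up to the factor \<open>(s\<^sup>2 + t\<^sup>2)\<^sup>2\<close>.\<close>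
lemma subrank3_pencil_inverse:
  assumes "v = s *\<^sub>R w + t *\<^sub>R subrank3_pencil w"
  shows "s *\<^sub>R ((s^2 + 2*t^2) *\<^sub>R v + t^2 *\<^sub>R subrank3_pencil (subrank3_pencil v))
      - t *\<^sub>R subrank3_pencil ((s^2 + 2*t^2) *\<^sub>R v + t^2 *\<^sub>R subrank3_pencil (subrank3_pencil v))
     = ((s^2 + t^2)^2) *\<^sub>R w"
  unfolding assms subrank3_pencil_def
  by (simp add: vec_eq_iff forall_4 sum_4 subrank3_coeff_def succ3_def algebra_simps power2_eq_square)

lemma nonsingular_on_subrank3_plane: "nonsingular_on subrank3_plane subrank3_tensor"
  unfolding nonsingular_on_def
proof (intro allI impI notI)
  fix p :: "real \<times> real" and w :: "real^4"
  assume "p \<noteq> 0" "w \<noteq> 0" "contract12 subrank3_tensor (subrank3_plane p) w = 0"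
  obtain s t where p: "p = (s, t)" by fastforce
  have "subrank3_pencil 0 = 0" by (simp add: subrank3_pencil_def vec_eq_iff)
  moreover have "0 = s *\<^sub>R w + t *\<^sub>R subrank3_pencil w"
    using \<open>contract12 _ _ w = 0\<close> by (simp add: p contract12_subrank3_plane)
  ultimately have "((s^2 + t^2)^2) *\<^sub>R w = 0"
    using subrank3_pencil_inverse[of 0 s w t] by simp
  moreover have "s^2 + t^2 > 0" using \<open>p \<noteq> 0\<close> by (auto simp: p zero_prod_def add_pos_nonneg add_nonneg_pos)
  ultimately show False using \<open>w \<noteq> 0\<close> by simp
qed

definition emb34 :: "3 \<Rightarrow> 4" where
  "emb34 a = (if a = 1 then 1 else if a = 2 then 2 else 3)"

definition proj43 :: "4 \<Rightarrow> 3" where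
  "proj43 i = (if i = 1 then 1 else if i = 2 then 2 else 3)"

definition coordinate_embedding :: "real^4^3" where
  "coordinate_embedding = (\<chi> a. axis (emb34 a) 1)"

lemma restriction_map_coordinate_embedding:
  fixes A B C :: "real^4^3" and T :: "real^4^4^4"
  defines "E \<equiv> coordinate_embedding"
  shows "restriction_map A E E T $a$b$c = (\<Sum>i\<in>UNIV. A$a$i * T$i$(emb34 b)$(emb34 c))"
    and "restriction_map E B E T $a$b$c = (\<Sum>j\<in>UNIV. B$b$j * T$(emb34 a)$j$(emb34 c))"
    and "restriction_map E E C T $a$b$c = (\<Sum>k\<in>UNIV. C$c$k * T$(emb34 a)$(emb34 b)$k)"
    and "restriction_map E E E T $a$b$c = T$(emb34 a)$(emb34 b)$(emb34 c)"
  unfolding restriction_map_def coordinate_embedding_def E_def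
  by (simp_all add: sum_distrib_left[symmetric] mult.assoc mult.left_commute[of "_ $ _ $ _"] sum_axis_mult)

lemma restriction_map_subrank3_tensor:
  "restriction_map coordinate_embedding coordinate_embedding coordinate_embedding subrank3_tensor = unit_cube"
  by (simp add: vec_eq_iff forall_3 restriction_map_coordinate_embedding(4) subrank3_tensor_def unit_cube_def
      subrank3_coeff_def emb34_def)

text \<open>A linear right inverse of the derivative in \<open>restricts_to_unit_near_submersion\<close> at the
  embedding \<open>E\<close>, found by solving the linearised equation entry by entry. Indices of type \<open>3\<close> are
  added modulo 3.\<close>
definition sol_beta :: "real^3^3^3 \<Rightarrow> 3 \<Rightarrow> real" where
  "sol_beta W b = W$(b+1)$b$(b+2)"

definition sol_alpha :: "real^3^3^3 \<Rightarrow> 3 \<Rightarrow> real" where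
  "sol_alpha W a = W$a$(a+1)$(a+2) + sol_beta W (a+1)"

definition subrank3_solution :: "real^3^3^3 \<Rightarrow> (real^4^3) \<times> (real^4^3) \<times> (real^4^3)" where
  "subrank3_solution W =
    ((\<chi> a i. if i = 4 then sol_alpha W a
        else W$a$(proj43 i)$(proj43 i) - (if proj43 i = a+1 then sol_beta W (a+1)
          else if proj43 i = a+2 then - sol_beta W (a+2) else 0)),
     (\<chi> b i. if i = 4 then sol_beta W b
        else if proj43 i = b then 0
        else W$(proj43 i)$b$(proj43 i) - (if b = proj43 i + 2 then sol_alpha W (proj43 i) else 0)),
     (\<chi> c i. if i = 4 then 0
        else if proj43 i = c then 0
        else W$(proj43 i)$(proj43 i)$c - (if c = proj43 i + 1 then sol_alpha W (proj43 i) + sol_beta W (proj43 i)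
          else if c = proj43 i + 2 then - sol_beta W (proj43 i) else 0)))"

lemma linear_subrank3_solution: "linear subrank3_solution"
  by (rule linearI)
    (simp_all add: subrank3_solution_def sol_alpha_def sol_beta_def vec_eq_iff algebra_simps)

lemma subrank3_solution_right_inverse:
  defines "E \<equiv> coordinate_embedding"
  shows "restriction_map (fst (subrank3_solution W)) E E subrank3_tensor
    + restriction_map E (fst (snd (subrank3_solution W))) E subrank3_tensor
    + restriction_map E E (snd (snd (subrank3_solution W))) subrank3_tensor = W"
proof -
  have mod3: "(4::3) = 1" "(5::3) = 2" "(6::3) = 3" "(7::3) = 1" "(8::3) = 2" by simp_all
  show ?thesis
    unfolding E_def vec_eq_iff plus_vec_def vec_lambda_beta restriction_map_coordinate_embedding
    by (simp add: forall_3 sum_4 subrank3_solution_def sol_alpha_def sol_beta_def subrank3_tensor_def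
        subrank3_coeff_def emb34_def proj43_def succ3_def mod3)
qed

lemma restricts_to_unit_3_near_subrank3_tensor:
  "\<exists>e>0. \<forall>T. dist T subrank3_tensor < e \<longrightarrow> restricts_to_unit T 3"
  using restricts_to_unit_near_submersion[OF restriction_map_subrank3_tensor
      linear_subrank3_solution subrank3_solution_right_inverse]
  by simp

lemma typical_subrank_3: "typical_subrank TYPE(real^4^4^4) 3"
proof -
  obtain e where e: "e > 0" "\<And>T. dist T subrank3_tensor < e \<Longrightarrow> restricts_to_unit T 3"
    using restricts_to_unit_3_near_subrank3_tensor by blast
  show ?thesis
  proof (rule typical_subrankI)
    let ?U = "{T :: real^4^4^4. nonsingular_on subrank3_plane T} \<inter> ball subrank3_tensor e"
    show "open ?U" using open_nonsingular_on[OF linear_subrank3_plane] by blast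
    have "subrank3_tensor \<in> ?U" using nonsingular_on_subrank3_plane e(1) by simp
    then show "?U \<noteq> {}" by blast
    fix T assume T: "T \<in> ?U"
    then have "restricts_to_unit T 3" using e(2) by (simp add: dist_commute)
    moreover have "\<not> restricts_to_unit T 4"
      using T no_full_unit_restriction_if_nonsingular_on_plane[OF linear_subrank3_plane, of T] by simp
    ultimately show "restricts_to_unit T 3 \<and> \<not> restricts_to_unit T (Suc 3)"
      by (simp add: numeral_eq_Suc)
  qed
qed

theorem theorem4p13:
  shows "{r. typical_subrank TYPE(real^4^4^4) r} = {2, 3}"
proof
  show "{r. typical_subrank TYPE(real^4^4^4) r} \<subseteq> {2, 3}"
  proof
    fix r assume "r \<in> {r. typical_subrank TYPE(real^4^4^4) r}"
    then have typical: "typical_subrank TYPE(real^4^4^4) r" by simp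
    have "2 \<le> r" using typical_subrank_ge_if_dense[OF dense_restricts_to_unit_2 typical] .
    moreover have "r \<le> 4" using typical_subrank_le_card[OF typical] by simp
    moreover have "r \<noteq> 4" using typical not_typical_full_subrank[where 'i = 4 and 'j = 4 and 'k = 4] by auto
    ultimately show "r \<in> {2, 3}" by auto
  qed
  show "{2, 3} \<subseteq> {r. typical_subrank TYPE(real^4^4^4) r}"
    using typical_subrank_2 typical_subrank_3 by auto
qed

end
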